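(* Let $G$ be a graph with no edge $e$ satisfying $|F_e|\ge 4$, no induced chordless cycle on 4 vertices, and no induced path on at least 7 vertices, and let $u,v,w$ be an induced path on three vertices in $G$, with $E_i$ and $j$ defined from $u,v,w$ as in the context. Then $|E_j|\le|E_{j-1}|\le\cdots\le|E_0|$; that is, $|E_i|\le|E_{i-1}|$ for every integer $i$ with $1\le i\le j$ (for all $i\ge1$ if $j=\infty$).
   Context: All graphs are finite, simple and undirected. For an edge $e$ of $G$, $F_e$ denotes the set of all edges $e'$ of $G$ such that $V(e)\cup V(e')$ induces a path on three vertices in $G$. Let $u,v,w$ be an induced path on three vertices ($uv,vw\in E(G)$, $uw\notin E(G)$), and $A=\{u,v,w\}$. $B$ is the set of vertices not in $A$ with exactly one or two neighbors in $A$; $C$ is the set of vertices adjacent to all three vertices of $A$; $D$ is the set of vertices not in $A\cup B\cup C$ with at least one neighbor in $C$. For $i\ge1$, $B_i$ is the set of vertices $x\notin A\cup B\cup C\cup D$ whose distance in $G$ to the set $B$ is exactly $i$; $B_0=B$, $B_{-1}=A$. For $i\ge0$, $E_i$ is the set of edges with one endpoint in $B_i$ and the other in $B_{i+1}$. $j$ is the minimum index $i\ge0$ such that there is an edge $e\in E_i$ with $|F_e|\ge3$, and $j=\infty$ if no such index exists. *)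

theory Defs
  imports Main "HOL-Library.Extended_Nat"
begin

definition graph :: "'a set \<Rightarrow> ('a \<Rightarrow> 'a \<Rightarrow> bool) \<Rightarrow> bool" where
  "graph V adj \<longleftrightarrow> finite V \<and> (\<forall>x y. adj x y \<longrightarrow> x \<in> V \<and> y \<in> V)
     \<and> (\<forall>x y. adj x y \<longrightarrow> adj y x) \<and> (\<forall>x. \<not> adj x x)"

definition edges :: "('a \<Rightarrow> 'a \<Rightarrow> bool) \<Rightarrow> 'a set set" where
  "edges adj = {{x, y} | x y. adj x y}"

definition induces_P3 :: "('a \<Rightarrow> 'a \<Rightarrow> bool) \<Rightarrow> 'a set \<Rightarrow> bool" where
  "induces_P3 adj S \<longleftrightarrow> (\<exists>x y z. x \<noteq> y \<and> y \<noteq> z \<and> x \<noteq> z \<and> S = {x, y, z}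
       \<and> adj x y \<and> adj y z \<and> \<not> adj x z)"

definition Fset :: "('a \<Rightarrow> 'a \<Rightarrow> bool) \<Rightarrow> 'a set \<Rightarrow> 'a set set" where
  "Fset adj e = {e' \<in> edges adj. induces_P3 adj (e \<union> e')}"

definition induced_path :: "('a \<Rightarrow> 'a \<Rightarrow> bool) \<Rightarrow> 'a list \<Rightarrow> bool" where
  "induced_path adj xs \<longleftrightarrow> distinct xs \<and>
     (\<forall>a < length xs. \<forall>b < length xs. adj (xs ! a) (xs ! b) \<longleftrightarrow> (a = b + 1 \<or> b = a + 1))"

definition induced_C4 :: "('a \<Rightarrow> 'a \<Rightarrow> bool) \<Rightarrow> 'a \<Rightarrow> 'a \<Rightarrow> 'a \<Rightarrow> 'a \<Rightarrow> bool" where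
  "induced_C4 adj a b c d \<longleftrightarrow> distinct [a, b, c, d] \<and>
     adj a b \<and> adj b c \<and> adj c d \<and> adj d a \<and> \<not> adj a c \<and> \<not> adj b d"

definition walk_to :: "('a \<Rightarrow> 'a \<Rightarrow> bool) \<Rightarrow> 'a \<Rightarrow> 'a set \<Rightarrow> nat \<Rightarrow> bool" where
  "walk_to adj x S n \<longleftrightarrow> (\<exists>xs. length xs = n + 1 \<and> hd xs = x \<and> last xs \<in> S \<and>
      (\<forall>k < n. adj (xs ! k) (xs ! (k + 1))))"

definition dist_set_eq :: "('a \<Rightarrow> 'a \<Rightarrow> bool) \<Rightarrow> 'a \<Rightarrow> 'a set \<Rightarrow> nat \<Rightarrow> bool" where
  "dist_set_eq adj x S n \<longleftrightarrow> walk_to adj x S n \<and> (\<forall>m < n. \<not> walk_to adj x S m)"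

definition Aset :: "'a \<Rightarrow> 'a \<Rightarrow> 'a \<Rightarrow> 'a set" where
  "Aset u v w = {u, v, w}"

definition Bbase :: "'a set \<Rightarrow> ('a \<Rightarrow> 'a \<Rightarrow> bool) \<Rightarrow> 'a \<Rightarrow> 'a \<Rightarrow> 'a \<Rightarrow> 'a set" where
  "Bbase V adj u v w = {x \<in> V - Aset u v w.
      card {a \<in> Aset u v w. adj x a} = 1 \<or> card {a \<in> Aset u v w. adj x a} = 2}"

definition Cset :: "'a set \<Rightarrow> ('a \<Rightarrow> 'a \<Rightarrow> bool) \<Rightarrow> 'a \<Rightarrow> 'a \<Rightarrow> 'a \<Rightarrow> 'a set" where
  "Cset V adj u v w = {x \<in> V. adj x u \<and> adj x v \<and> adj x w}"

definition Dset :: "'a set \<Rightarrow> ('a \<Rightarrow> 'a \<Rightarrow> bool) \<Rightarrow> 'a \<Rightarrow> 'a \<Rightarrow> 'a \<Rightarrow> 'a set" where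
  "Dset V adj u v w = {x \<in> V - (Aset u v w \<union> Bbase V adj u v w \<union> Cset V adj u v w).
      \<exists>c \<in> Cset V adj u v w. adj x c}"

fun Bi :: "'a set \<Rightarrow> ('a \<Rightarrow> 'a \<Rightarrow> bool) \<Rightarrow> 'a \<Rightarrow> 'a \<Rightarrow> 'a \<Rightarrow> nat \<Rightarrow> 'a set" where
  "Bi V adj u v w 0 = Bbase V adj u v w"
| "Bi V adj u v w (Suc i) = {x \<in> V - (Aset u v w \<union> Bbase V adj u v w \<union> Cset V adj u v w
      \<union> Dset V adj u v w). dist_set_eq adj x (Bbase V adj u v w) (Suc i)}"

definition Ei :: "'a set \<Rightarrow> ('a \<Rightarrow> 'a \<Rightarrow> bool) \<Rightarrow> 'a \<Rightarrow> 'a \<Rightarrow> 'a \<Rightarrow> nat \<Rightarrow> 'a set set" where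
  "Ei V adj u v w i = {{x, y} | x y. adj x y \<and> x \<in> Bi V adj u v w i \<and> y \<in> Bi V adj u v w (Suc i)}"

definition jidx :: "'a set \<Rightarrow> ('a \<Rightarrow> 'a \<Rightarrow> bool) \<Rightarrow> 'a \<Rightarrow> 'a \<Rightarrow> 'a \<Rightarrow> enat" where
  "jidx V adj u v w =
     (if \<exists>i. \<exists>e \<in> Ei V adj u v w i. card (Fset adj e) \<ge> 3
      then enat (LEAST i. \<exists>e \<in> Ei V adj u v w i. card (Fset adj e) \<ge> 3)
      else \<infinity>)"

end

theory Submission
  imports Defs
begin

text \<open>Every vertex y of B_(i+1) has a neighbour in B_i. Indeed, a neighbour x of y at distance i
  from B is outside A and C (y has no neighbour in A, and none in C since y is not in D), and x is
  not in D: for c in C adjacent to x, the set F_xc would contain cu, cv, cw and xy.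
  Now let i < j and let x in B_i and y in B_(i+1) be adjacent. Then x has a neighbour p not
  adjacent to y (in A if i = 0, in B_(i-1) otherwise), so F_xy contains xp and every yz with z in
  B_(i+2); as |F_xy| <= 2, y has at most one neighbour in B_(i+2). Hence "sharing the endpoint in
  B_(i+1)" relates every edge of E_(i+1) to some edge of E_i, and no two edges of E_(i+1) to the
  same one, so |E_(i+1)| <= |E_i|.\<close>

lemma graph_adj_sym: "graph V adj \<Longrightarrow> adj x y \<Longrightarrow> adj y x"
  unfolding graph_def by blast

lemma graph_adj_neq: "graph V adj \<Longrightarrow> adj x y \<Longrightarrow> x \<noteq> y"
  unfolding graph_def by blast

lemma walk_to_0_iff: "walk_to adj x S 0 \<longleftrightarrow> x \<in> S"
proof
  assume "walk_to adj x S 0"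
  then obtain xs where "length xs = 1" "hd xs = x" "last xs \<in> S"
    unfolding walk_to_def by auto
  then show "x \<in> S" by (cases xs) auto
next
  assume "x \<in> S"
  then show "walk_to adj x S 0"
    unfolding walk_to_def by (intro exI[of _ "[x]"]) auto
qed

lemma walk_to_Suc_iff: "walk_to adj x S (Suc n) \<longleftrightarrow> (\<exists>x'. adj x x' \<and> walk_to adj x' S n)"
proof
  assume "walk_to adj x S (Suc n)"
  then obtain y ys where xs: "length (y # ys) = Suc n + 1" "y = x" "last (y # ys) \<in> S"
    "\<forall>k < Suc n. adj ((y # ys) ! k) ((y # ys) ! (k + 1))"
    unfolding walk_to_def by (metis hd_Cons_tl list.size(3) add_is_0 zero_neq_one)
  have "walk_to adj (ys ! 0) S n"
    unfolding walk_to_def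
  proof (intro exI[of _ ys] conjI allI impI)
    show "length ys = n + 1" using xs(1) by simp
    then show "hd ys = ys ! 0" "last ys \<in> S" using xs(3) by (cases ys; simp)+
    show "adj (ys ! k) (ys ! (k + 1))" if "k < n" for k
      using xs(4)[rule_format, of "Suc k"] that by simp
  qed
  moreover have "adj x (ys ! 0)" using xs(2,4) by force
  ultimately show "\<exists>x'. adj x x' \<and> walk_to adj x' S n" by blast
next
  assume "\<exists>x'. adj x x' \<and> walk_to adj x' S n"
  then obtain x' xs where h: "adj x x'" "length xs = n + 1" "hd xs = x'" "last xs \<in> S"
    "\<forall>k < n. adj (xs ! k) (xs ! (k + 1))" unfolding walk_to_def by blast
  then have "xs \<noteq> []" by auto
  show "walk_to adj x S (Suc n)" unfolding walk_to_def
  proof (intro exI[of _ "x # xs"] conjI allI impI)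
    show "length (x # xs) = Suc n + 1" "hd (x # xs) = x" "last (x # xs) \<in> S"
      using h \<open>xs \<noteq> []\<close> by simp_all
    show "adj ((x # xs) ! k) ((x # xs) ! (k + 1))" if "k < Suc n" for k
      using h that \<open>xs \<noteq> []\<close> by (cases k) (simp_all add: hd_conv_nth)
  qed
qed

lemma Bi_walk_to: "x \<in> Bi V adj u v w k \<Longrightarrow> walk_to adj x (Bbase V adj u v w) k"
  by (cases k) (auto simp: walk_to_0_iff dist_set_eq_def)

lemma Bi_no_shorter_walk_to:
  "x \<in> Bi V adj u v w k \<Longrightarrow> m < k \<Longrightarrow> \<not> walk_to adj x (Bbase V adj u v w) m"
  by (cases k) (auto simp: dist_set_eq_def)

lemma Bi_index_unique: "x \<in> Bi V adj u v w k \<Longrightarrow> x \<in> Bi V adj u v w m \<Longrightarrow> k = m"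
  by (metis Bi_no_shorter_walk_to Bi_walk_to linorder_neqE_nat)

lemma Bi_adj_index_le:
  assumes "x \<in> Bi V adj u v w k" "y \<in> Bi V adj u v w m" "adj y x"
  shows "m \<le> Suc k"
  using assms Bi_walk_to Bi_no_shorter_walk_to walk_to_Suc_iff by (metis not_le)

lemma Bi_subset: "Bi V adj u v w k \<subseteq> V"
  by (cases k) (auto simp: Bbase_def)

lemma Bi_Suc_outside:
  "x \<in> Bi V adj u v w (Suc k) \<Longrightarrow>
    x \<in> V - (Aset u v w \<union> Bbase V adj u v w \<union> Cset V adj u v w \<union> Dset V adj u v w)"
  by simp

lemma not_adj_Cset_if_outside:
  "x \<in> V - (Aset u v w \<union> Bbase V adj u v w \<union> Cset V adj u v w \<union> Dset V adj u v w) \<Longrightarrow>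
    c \<in> Cset V adj u v w \<Longrightarrow> \<not> adj x c"
  unfolding Dset_def by blast

lemma EiE:
  assumes "e \<in> Ei V adj u v w k"
  obtains x y where "e = {x, y}" "adj x y" "x \<in> Bi V adj u v w k" "y \<in> Bi V adj u v w (Suc k)"
    "e \<inter> Bi V adj u v w k = {x}" "e \<inter> Bi V adj u v w (Suc k) = {y}"
proof -
  obtain x y where "e = {x, y}" "adj x y" "x \<in> Bi V adj u v w k" "y \<in> Bi V adj u v w (Suc k)"
    using assms unfolding Ei_def by blast
  moreover have "x \<notin> Bi V adj u v w (Suc k)" "y \<notin> Bi V adj u v w k"
    using Bi_index_unique \<open>x \<in> Bi V adj u v w k\<close> \<open>y \<in> Bi V adj u v w (Suc k)\<close> n_not_Suc_n
    by metis+
  ultimately show ?thesis using that[of x y] by auto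
qed

lemma finite_Ei: "graph V adj \<Longrightarrow> finite (Ei V adj u v w k)"
proof -
  assume "graph V adj"
  moreover have "Ei V adj u v w k \<subseteq> Pow V"
    using Bi_subset by (fastforce elim: EiE)
  ultimately show ?thesis
    unfolding graph_def by (meson finite_Pow_iff finite_subset)
qed

lemma finite_Fset: "graph V adj \<Longrightarrow> finite (Fset adj e)"
proof -
  assume "graph V adj"
  then have "Fset adj e \<subseteq> Pow V" "finite (Pow V)"
    unfolding Fset_def edges_def graph_def by auto
  then show ?thesis by (rule finite_subset)
qed

lemma P3_edge_in_Fset:
  assumes "graph V adj" "adj a b" "adj b c" "\<not> adj a c" "a \<noteq> c"
  shows "{b, c} \<in> Fset adj {a, b}"
proof -
  have "a \<noteq> b" "b \<noteq> c" using assms graph_adj_neq by metis+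
  then have "induces_P3 adj ({a, b} \<union> {b, c})"
    unfolding induces_P3_def using assms by (intro exI[of _ a] exI[of _ b] exI[of _ c]) auto
  moreover have "{b, c} \<in> edges adj" unfolding edges_def using assms by blast
  ultimately show ?thesis unfolding Fset_def by blast
qed

lemma Fset_card_less_3_below_jidx:
  assumes "enat (Suc k) \<le> jidx V adj u v w"
  shows "\<forall>e \<in> Ei V adj u v w k. card (Fset adj e) < 3"
proof (cases "\<exists>i. \<exists>e \<in> Ei V adj u v w i. card (Fset adj e) \<ge> 3")
  case True
  then have "k < (LEAST i. \<exists>e \<in> Ei V adj u v w i. card (Fset adj e) \<ge> 3)"
    using assms by (simp add: jidx_def)
  then show ?thesis using not_less_Least by fastforce
next
  case False
  then show ?thesis by (simp add: not_le)
qed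

context
  fixes V :: "'a set" and adj :: "'a \<Rightarrow> 'a \<Rightarrow> bool" and u v w :: 'a
  assumes graph: "graph V adj" and uv: "adj u v" and vw: "adj v w" and uw: "u \<noteq> w"
begin

lemma not_adj_Aset_if_outside:
  assumes x: "x \<in> V - (Aset u v w \<union> Bbase V adj u v w \<union> Cset V adj u v w)"
    and a: "a \<in> Aset u v w"
  shows "\<not> adj x a"
proof
  assume "adj x a"
  let ?N = "{a \<in> Aset u v w. adj x a}"
  have "?N \<subset> Aset u v w"
    using x graph_adj_sym[OF graph] unfolding Cset_def Aset_def by auto
  then have "card ?N < card (Aset u v w)"
    by (intro psubset_card_mono) (simp add: Aset_def)
  moreover have "card (Aset u v w) = 3"
    using uw graph_adj_neq[OF graph] uv vw unfolding Aset_def by auto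
  moreover have "card ?N \<noteq> 0" using \<open>adj x a\<close> a by (simp add: Aset_def) blast
  ultimately have "x \<in> Bbase V adj u v w" using x unfolding Bbase_def by auto
  then show False using x by blast
qed

lemma not_adj_Dset_if_outside:
  assumes F4: "\<forall>e \<in> edges adj. card (Fset adj e) < 4"
    and x: "x \<in> Dset V adj u v w"
    and y: "y \<in> V - (Aset u v w \<union> Bbase V adj u v w \<union> Cset V adj u v w \<union> Dset V adj u v w)"
  shows "\<not> adj x y"
proof
  assume xy: "adj x y"
  obtain c where c: "c \<in> Cset V adj u v w" "adj x c" using x unfolding Dset_def by blast
  have cA: "adj c u" "adj c v" "adj c w" using c(1) unfolding Cset_def by auto
  have "x \<in> V - (Aset u v w \<union> Bbase V adj u v w \<union> Cset V adj u v w)"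
    using x unfolding Dset_def by blast
  then have xA: "\<not> adj x u" "\<not> adj x v" "\<not> adj x w" "x \<notin> {u, v, w}"
    using not_adj_Aset_if_outside unfolding Aset_def by auto
  have "\<not> adj y c" "y \<noteq> c" using not_adj_Cset_if_outside[OF y c(1)] y c(1) by auto
  then have "{x, y} \<in> Fset adj {x, c}"
    using P3_edge_in_Fset[OF graph graph_adj_sym[OF graph c(2)] xy] graph_adj_sym[OF graph]
    by (metis insert_commute)
  moreover have "{c, a} \<in> Fset adj {x, c}" if "a \<in> {u, v, w}" for a
    using P3_edge_in_Fset[OF graph c(2)] cA xA that by blast
  ultimately have "{{c, u}, {c, v}, {c, w}, {x, y}} \<subseteq> Fset adj {x, c}" by blast
  moreover have "card {{c, u}, {c, v}, {c, w}, {x, y}} = 4"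
    using uw xA graph_adj_neq[OF graph uv] graph_adj_neq[OF graph vw]
      graph_adj_neq[OF graph cA(1)] graph_adj_neq[OF graph cA(2)] graph_adj_neq[OF graph cA(3)]
      graph_adj_neq[OF graph c(2)]
    by (auto simp: doubleton_eq_iff)
  moreover have "{x, c} \<in> edges adj" unfolding edges_def using c(2) by blast
  ultimately show False
    using F4 card_mono[OF finite_Fset[OF graph]] by (metis not_le)
qed

lemma Bi_Suc_has_lower_neighbour:
  assumes F4: "\<forall>e \<in> edges adj. card (Fset adj e) < 4"
    and y: "y \<in> Bi V adj u v w (Suc k)"
  shows "\<exists>x \<in> Bi V adj u v w k. adj x y"
proof -
  let ?B = "Bbase V adj u v w"
  obtain x where x: "adj y x" "walk_to adj x ?B k"
    using Bi_walk_to[OF y] walk_to_Suc_iff by metis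
  have x_min: "\<not> walk_to adj x ?B m" if "m < k" for m
    using Bi_no_shorter_walk_to[OF y] x(1) walk_to_Suc_iff that by (metis Suc_mono)
  have "x \<in> Bi V adj u v w k"
  proof (cases k)
    case 0
    then show ?thesis using x(2) by (simp add: walk_to_0_iff)
  next
    case (Suc k')
    have y_out: "y \<in> V - (Aset u v w \<union> ?B \<union> Cset V adj u v w \<union> Dset V adj u v w)"
      using Bi_Suc_outside[OF y] .
    have "x \<in> V" using x(1) graph unfolding graph_def by blast
    moreover have "x \<notin> Aset u v w"
      using not_adj_Aset_if_outside[of y x] y_out x(1) by blast
    moreover have "x \<notin> ?B" using x_min[of 0] Suc by (simp add: walk_to_0_iff)
    moreover have "x \<notin> Cset V adj u v w" using not_adj_Cset_if_outside[OF y_out] x(1) by blast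
    moreover have "x \<notin> Dset V adj u v w"
      using not_adj_Dset_if_outside[OF F4 _ y_out] graph_adj_sym[OF graph x(1)] by blast
    ultimately show ?thesis using x(2) x_min Suc by (simp add: dist_set_eq_def)
  qed
  then show ?thesis using graph_adj_sym[OF graph x(1)] by blast
qed

lemma Bi_has_neighbour_not_adj_Bi_Suc:
  assumes x: "x \<in> Bi V adj u v w k" and y: "y \<in> Bi V adj u v w (Suc k)"
  shows "\<exists>p. adj x p \<and> \<not> adj y p \<and> p \<noteq> y"
proof (cases k)
  case 0
  then have "x \<in> Bbase V adj u v w" using x by simp
  then have "{a \<in> Aset u v w. adj x a} \<noteq> {}"
    unfolding Bbase_def by (metis (mono_tags, lifting) card.empty mem_Collect_eq zero_neq_numeral zero_neq_one)
  then obtain a where "a \<in> Aset u v w" "adj x a" by blast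
  moreover have "y \<in> V - (Aset u v w \<union> Bbase V adj u v w \<union> Cset V adj u v w)"
    using y by auto
  ultimately show ?thesis using not_adj_Aset_if_outside by blast
next
  case (Suc k')
  let ?B = "Bbase V adj u v w"
  obtain p where p: "adj x p" "walk_to adj p ?B k'"
    using Bi_walk_to[OF x] Suc walk_to_Suc_iff by metis
  have "\<not> adj y p" "p \<noteq> y"
    using Bi_no_shorter_walk_to[OF y, of "Suc k'"] Bi_no_shorter_walk_to[OF y, of k'] p(2) Suc
    by (auto simp: walk_to_Suc_iff)
  then show ?thesis using p(1) by blast
qed

lemma Bi_Suc_upper_neighbour_unique:
  assumes F4: "\<forall>e \<in> edges adj. card (Fset adj e) < 4"
    and F3: "\<forall>e \<in> Ei V adj u v w k. card (Fset adj e) < 3"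
    and y: "y \<in> Bi V adj u v w (Suc k)"
    and z: "z \<in> Bi V adj u v w (Suc (Suc k))" "adj y z"
    and z': "z' \<in> Bi V adj u v w (Suc (Suc k))" "adj y z'"
  shows "z = z'"
proof (rule ccontr)
  assume "z \<noteq> z'"
  obtain x where x: "x \<in> Bi V adj u v w k" "adj x y"
    using Bi_Suc_has_lower_neighbour[OF F4 y] by blast
  obtain p where p: "adj x p" "\<not> adj y p" "p \<noteq> y"
    using Bi_has_neighbour_not_adj_Bi_Suc[OF x(1) y] by blast
  have x_far: "\<not> adj x t" "x \<noteq> t" if "t \<in> Bi V adj u v w (Suc (Suc k))" for t
  proof -
    show "\<not> adj x t"
      using Bi_adj_index_le[OF x(1) that] graph_adj_sym[OF graph] by fastforce
    show "x \<noteq> t"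
      using Bi_index_unique[OF x(1)] that by fastforce
  qed
  have "{x, p} \<in> Fset adj {x, y}"
    using P3_edge_in_Fset[OF graph graph_adj_sym[OF graph x(2)] p(1,2)] p(3) by (metis insert_commute)
  moreover have "{y, t} \<in> Fset adj {x, y}" if "t \<in> Bi V adj u v w (Suc (Suc k))" "adj y t" for t
    using P3_edge_in_Fset[OF graph x(2) that(2) x_far[OF that(1)]] .
  ultimately have "{{x, p}, {y, z}, {y, z'}} \<subseteq> Fset adj {x, y}" using z z' by blast
  moreover have "card {{x, p}, {y, z}, {y, z'}} = 3"
    using \<open>z \<noteq> z'\<close> graph_adj_neq[OF graph x(2)] p(1) x_far z z'
    by (auto simp: doubleton_eq_iff)
  moreover have "{x, y} \<in> Ei V adj u v w k" unfolding Ei_def using x y by blast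
  ultimately show False
    using F3 card_mono[OF finite_Fset[OF graph]] by (metis not_le)
qed

lemma card_Ei_Suc_le:
  assumes F4: "\<forall>e \<in> edges adj. card (Fset adj e) < 4"
    and F3: "\<forall>e \<in> Ei V adj u v w k. card (Fset adj e) < 3"
  shows "card (Ei V adj u v w (Suc k)) \<le> card (Ei V adj u v w k)"
proof (rule card_le_if_inj_on_rel[where r = "\<lambda>e e'. e \<inter> e' \<inter> Bi V adj u v w (Suc k) \<noteq> {}"])
  show "finite (Ei V adj u v w k)" using finite_Ei[OF graph] .
next
  fix e assume "e \<in> Ei V adj u v w (Suc k)"
  then obtain a where a: "a \<in> e" "a \<in> Bi V adj u v w (Suc k)" by (blast elim: EiE)
  then obtain x where "x \<in> Bi V adj u v w k" "adj x a"
    using Bi_Suc_has_lower_neighbour[OF F4] by blast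
  then have "{x, a} \<in> Ei V adj u v w k" unfolding Ei_def using a(2) by blast
  then show "\<exists>e'. e' \<in> Ei V adj u v w k \<and> e \<inter> e' \<inter> Bi V adj u v w (Suc k) \<noteq> {}"
    using a by blast
next
  fix e1 e2 e'
  assume e1: "e1 \<in> Ei V adj u v w (Suc k)" and e2: "e2 \<in> Ei V adj u v w (Suc k)"
    and e': "e' \<in> Ei V adj u v w k"
    and r: "e1 \<inter> e' \<inter> Bi V adj u v w (Suc k) \<noteq> {}" "e2 \<inter> e' \<inter> Bi V adj u v w (Suc k) \<noteq> {}"
  obtain y where y: "y \<in> Bi V adj u v w (Suc k)" "e' \<inter> Bi V adj u v w (Suc k) = {y}"
    using e' by (blast elim: EiE)
  have upper: "\<exists>z. e = {y, z} \<and> z \<in> Bi V adj u v w (Suc (Suc k)) \<and> adj y z"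
    if e: "e \<in> Ei V adj u v w (Suc k)" and r: "e \<inter> e' \<inter> Bi V adj u v w (Suc k) \<noteq> {}" for e
  proof -
    obtain a z where a: "e = {a, z}" "adj a z" "z \<in> Bi V adj u v w (Suc (Suc k))"
        "e \<inter> Bi V adj u v w (Suc k) = {a}"
      using e by (blast elim: EiE)
    have "e \<inter> e' \<inter> Bi V adj u v w (Suc k) = {a} \<inter> {y}"
      using a(4) y(2) by blast
    then have "a = y" using r by auto
    then show ?thesis using a by blast
  qed
  obtain z1 where z1: "e1 = {y, z1}" "z1 \<in> Bi V adj u v w (Suc (Suc k))" "adj y z1"
    using upper[OF e1 r(1)] by blast
  obtain z2 where z2: "e2 = {y, z2}" "z2 \<in> Bi V adj u v w (Suc (Suc k))" "adj y z2"
    using upper[OF e2 r(2)] by blast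
  have "z1 = z2" by (rule Bi_Suc_upper_neighbour_unique[OF F4 F3 y(1) z1(2,3) z2(2,3)])
  then show "e1 = e2" using z1(1) z2(1) by simp
qed

end

theorem corollary1:
  fixes V :: "'a set" and adj :: "'a \<Rightarrow> 'a \<Rightarrow> bool" and u v w :: 'a
  assumes "graph V adj"
    and "\<forall>e \<in> edges adj. card (Fset adj e) < 4"
    and "\<forall>a b c d. \<not> induced_C4 adj a b c d"
    and "\<forall>xs. set xs \<subseteq> V \<and> length xs \<ge> 7 \<longrightarrow> \<not> induced_path adj xs"
    and "adj u v" and "adj v w" and "u \<noteq> w" and "\<not> adj u w"
  shows "\<forall>i::nat. 1 \<le> i \<and> enat i \<le> jidx V adj u v w \<longrightarrow>
           card (Ei V adj u v w i) \<le> card (Ei V adj u v w (i - 1))"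
proof (intro allI impI)
  fix i assume i: "1 \<le> i \<and> enat i \<le> jidx V adj u v w"
  then obtain k where i_Suc: "i = Suc k" by (cases i) auto
  then have "\<forall>e \<in> Ei V adj u v w k. card (Fset adj e) < 3"
    using i Fset_card_less_3_below_jidx by simp
  then show "card (Ei V adj u v w i) \<le> card (Ei V adj u v w (i - 1))"
    using card_Ei_Suc_le[OF assms(1,5,6,7,2)] i_Suc by simp
qed

end
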